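(* $\mathrm{cov}(\mathcal{M})\leq\mathrm{cov}^{+}(\mathcal{S}pl)\leq\mathfrak{r}$.
   Context: For an infinite $A\subseteq\omega$, let $S(A)$ be the set of all $\sigma\in2^{<\omega}$ such that $\sigma$ is constant on $A\cap\mathrm{dom}(\sigma)$. The splitting ideal $\mathcal{S}pl$ is the ideal on $2^{<\omega}$ generated by the sets $S(A)$, $A\in[\omega]^{\omega}$. For an ideal $\mathcal{J}$, $\mathrm{cov}^{+}(\mathcal{J})=\min\{|\mathcal{F}|:\mathcal{F}\subseteq\mathcal{J}$ and for every $\mathcal{J}$-positive $X$ there is $F\in\mathcal{F}$ with $|X\cap F|=\omega\}$. $\mathcal{M}$ is the ideal of meager subsets of $2^\omega$, and $\mathfrak{r}$ is the reaping number. *)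

theory Defs
  imports Main
begin

text \<open>Cantor space 2^omega is nat => bool; 2^{<omega} is bool list.
  dom(sigma) = {0..<length sigma}.\<close>

definition basic_open :: "bool list \<Rightarrow> (nat \<Rightarrow> bool) set" where
  "basic_open \<sigma> = {x. \<forall>i<length \<sigma>. x i = \<sigma> ! i}"

definition nowhere_dense_cantor :: "(nat \<Rightarrow> bool) set \<Rightarrow> bool" where
  "nowhere_dense_cantor A \<longleftrightarrow>
     (\<forall>\<sigma>. \<exists>\<rho>. basic_open (\<sigma> @ \<rho>) \<inter> A = {})"

definition meager_cantor :: "(nat \<Rightarrow> bool) set \<Rightarrow> bool" where
  "meager_cantor A \<longleftrightarrow>
     (\<exists>N :: nat \<Rightarrow> (nat \<Rightarrow> bool) set. (\<forall>n. nowhere_dense_cantor (N n)) \<and> A \<subseteq> (\<Union>n. N n))"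

definition cov_M_family :: "(nat \<Rightarrow> bool) set set \<Rightarrow> bool" where
  "cov_M_family \<G> \<longleftrightarrow> (\<forall>G\<in>\<G>. meager_cantor G) \<and> \<Union>\<G> = UNIV"

definition S_set :: "nat set \<Rightarrow> bool list set" where
  "S_set A = {\<sigma>. \<forall>i\<in>A. \<forall>j\<in>A. i < length \<sigma> \<longrightarrow> j < length \<sigma> \<longrightarrow> \<sigma> ! i = \<sigma> ! j}"

definition Spl :: "bool list set set" where
  "Spl = {X. \<exists>\<A>. finite \<A> \<and> (\<forall>A\<in>\<A>. infinite A) \<and> X \<subseteq> (\<Union>A\<in>\<A>. S_set A)}"

definition cov_plus_family :: "'a set set \<Rightarrow> 'a set set \<Rightarrow> bool" where
  "cov_plus_family J \<F> \<longleftrightarrow> \<F> \<subseteq> J \<and>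
     (\<forall>X. X \<notin> J \<longrightarrow> (\<exists>F\<in>\<F>. infinite (X \<inter> F)))"

definition splits :: "nat set \<Rightarrow> nat set \<Rightarrow> bool" where
  "splits A R \<longleftrightarrow> infinite (R \<inter> A) \<and> infinite (R - A)"

definition reaping_family :: "nat set set \<Rightarrow> bool" where
  "reaping_family \<R> \<longleftrightarrow> (\<forall>R\<in>\<R>. infinite R) \<and> (\<forall>A. \<exists>R\<in>\<R>. \<not> splits A R)"

end

theory Submission
  imports Defs "HOL-Library.Infinite_Set" "HOL-Library.Countable_Set" "HOL-Library.Sublist"
begin

(* cov(M) <= cov+(Spl): every c in 2^omega fixes the block lengths of an embedding of the full
   binary tree into 2^<omega, whose range X_c is Spl-positive because along suitable branches any
   finitely many infinite sets become non-constant. For infinite A the set of c for which X_c meets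
   S(A) infinitely often is nowhere dense: a finite condition extends to one forcing, at a single
   level, blocks on which every node of X_c is non-constant on A. A cov+-family F therefore yields
   the cover of 2^omega by the meager sets {c. X_c meets F infinitely often}, F in F.

   cov+(Spl) <= r: an infinite X in 2^<omega has a branch z and members sigma_k that follow z below
   a_k and end before a_(k+1). A reaping set R is almost homogeneous for z, and a second reaping
   set R' makes enumerate R ` R' almost contained in, or almost disjoint from, the union of the
   even intervals [a_k, a_(k+1)). Then infinitely many sigma_k are constant on a tail of
   enumerate R ` R', so the sets S(enumerate R ` R' - n) form a cov+-family of size |R|. *)

unbundle cardinal_syntax

lemma S_setI: "(\<And>i. i \<in> A \<Longrightarrow> i < length \<sigma> \<Longrightarrow> \<sigma> ! i = b) \<Longrightarrow> \<sigma> \<in> S_set A"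
  unfolding S_set_def by (intro CollectI ballI impI) metis

lemma not_in_S_setI:
  "p \<in> A \<Longrightarrow> q \<in> A \<Longrightarrow> p < length \<sigma> \<Longrightarrow> q < length \<sigma> \<Longrightarrow> \<sigma> ! p \<noteq> \<sigma> ! q \<Longrightarrow> \<sigma> \<notin> S_set A"
  unfolding S_set_def by blast

lemma S_setD: "\<sigma> \<in> S_set A \<Longrightarrow> i \<in> A \<Longrightarrow> j \<in> A \<Longrightarrow> i < length \<sigma> \<Longrightarrow> j < length \<sigma> \<Longrightarrow> \<sigma> ! i = \<sigma> ! j"
  unfolding S_set_def by blast

lemma S_set_prefix:
  assumes "prefix \<sigma> \<tau>" "\<tau> \<in> S_set A"
  shows "\<sigma> \<in> S_set A"
proof -
  obtain \<rho> where \<tau>: "\<tau> = \<sigma> @ \<rho>"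
    using assms(1) by (rule prefixE)
  have "\<sigma> ! i = \<sigma> ! j" if "i \<in> A" "j \<in> A" "i < length \<sigma>" "j < length \<sigma>" for i j
    using S_setD[OF assms(2) that(1,2)] that(3,4) unfolding \<tau> by (simp add: nth_append)
  then show ?thesis
    unfolding S_set_def by blast
qed

lemma S_set_in_Spl: "infinite A \<Longrightarrow> S_set A \<in> Spl"
  unfolding Spl_def by (intro CollectI exI[of _ "{A}"]) auto

lemma finite_in_Spl:
  assumes "finite X"
  shows "X \<in> Spl"
proof -
  obtain m where "length ` X \<subseteq> {..<m}"
    using finite_nat_bounded assms by blast
  then have "X \<subseteq> S_set {m..}"
    by (auto intro!: S_setI[where b = True])
  moreover have "infinite {m..}"
    by (simp add: infinite_Ici)
  ultimately show ?thesis
    unfolding Spl_def by (intro CollectI exI[of _ "{{m..}}"]) auto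
qed

section \<open>Reaping families and cov+(Spl)\<close>

definition even_blocks :: "(nat \<Rightarrow> nat) \<Rightarrow> nat set" where
  "even_blocks a = {j. \<exists>k. even k \<and> a k \<le> j \<and> j < a (Suc k)}"

lemma strict_mono_block_unique:
  fixes a :: "nat \<Rightarrow> nat"
  assumes "strict_mono a" "a k \<le> j" "j < a (Suc k)" "a k' \<le> j" "j < a (Suc k')"
  shows "k = k'"
proof (rule ccontr)
  assume "k \<noteq> k'"
  then have "Suc k \<le> k' \<or> Suc k' \<le> k"
    by linarith
  then have "a (Suc k) \<le> a k' \<or> a (Suc k') \<le> a k"
    using \<open>strict_mono a\<close> strict_mono_less_eq by blast
  then show False
    using assms(2-5) by (elim disjE; linarith)
qed

lemma mem_even_blocks_iff:
  assumes "strict_mono a" "a k \<le> j" "j < a (Suc k)"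
  shows "j \<in> even_blocks a \<longleftrightarrow> even k"
  using strict_mono_block_unique[OF assms] assms(2,3) unfolding even_blocks_def by blast

lemma splits_even_blocks:
  assumes a: "strict_mono a" and meets: "\<And>k. \<exists>j\<in>R. a k \<le> j \<and> j < a (Suc k)"
  shows "splits (even_blocks a) R"
proof -
  have "\<forall>k. \<exists>j. j \<in> R \<and> a k \<le> j \<and> j < a (Suc k)"
    using meets by blast
  from choice[OF this] obtain f where f: "\<forall>k. f k \<in> R \<and> a k \<le> f k \<and> f k < a (Suc k)"
    by blast
  have "f k < f (Suc k)" for k
    using f[rule_format, of k] f[rule_format, of "Suc k"] by linarith
  then have "strict_mono f"
    by (simp add: strict_mono_Suc_iff)
  then have "strict_mono (\<lambda>k. f (2 * k))" "strict_mono (\<lambda>k. f (2 * k + 1))"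
    unfolding strict_mono_def by auto
  then have inf: "infinite (range (\<lambda>k. f (2 * k)))" "infinite (range (\<lambda>k. f (2 * k + 1)))"
    using range_inj_infinite strict_mono_imp_inj_on by blast+
  have "f k \<in> even_blocks a \<longleftrightarrow> even k" for k
    using f mem_even_blocks_iff[OF a] by blast
  then have sub: "range (\<lambda>k. f (2 * k)) \<subseteq> R \<inter> even_blocks a"
    "range (\<lambda>k. f (2 * k + 1)) \<subseteq> R - even_blocks a"
    using f by auto
  show ?thesis
    unfolding splits_def using infinite_super[OF sub(1) inf(1)] infinite_super[OF sub(2) inf(2)]
    by (rule conjI)
qed

lemma finite_family_common_blocks:
  fixes \<R> :: "nat set set"
  assumes fin: "finite \<R>" and inf: "\<forall>R\<in>\<R>. infinite R"
  shows "\<exists>a. strict_mono a \<and> (\<forall>k. \<forall>R\<in>\<R>. \<exists>j\<in>R. a k \<le> j \<and> j < a (Suc k))"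
proof -
  have "\<exists>m'. m < m' \<and> (\<forall>R\<in>\<R>. \<exists>j\<in>R. m \<le> j \<and> j < m')" for m
  proof -
    have "\<forall>R\<in>\<R>. \<exists>j. j \<in> R \<and> m \<le> j"
      using inf unfolding infinite_nat_iff_unbounded_le by blast
    from bchoice[OF this] obtain g where g: "\<forall>R\<in>\<R>. g R \<in> R \<and> m \<le> g R"
      by blast
    obtain k where "g ` \<R> \<subseteq> {..<k}"
      using finite_nat_bounded[OF finite_imageI[OF fin]] by blast
    then have "\<forall>R\<in>\<R>. g R \<in> R \<and> m \<le> g R \<and> g R < max k (Suc m)"
      using g by fastforce
    moreover have "m < max k (Suc m)"
      by simp
    ultimately show ?thesis
      by blast
  qed
  then have "\<forall>m. \<exists>m'. m < m' \<and> (\<forall>R\<in>\<R>. \<exists>j\<in>R. m \<le> j \<and> j < m')"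
    by blast
  from choice[OF this] obtain next_m
    where next_m: "\<forall>m. m < next_m m \<and> (\<forall>R\<in>\<R>. \<exists>j\<in>R. m \<le> j \<and> j < next_m m)"
    by blast
  define a where "a k = (next_m ^^ k) 0" for k
  have "a (Suc k) = next_m (a k)" for k
    unfolding a_def by simp
  then have "strict_mono a" "\<forall>k. \<forall>R\<in>\<R>. \<exists>j\<in>R. a k \<le> j \<and> j < a (Suc k)"
    unfolding strict_mono_Suc_iff using next_m by simp_all
  then show ?thesis
    by blast
qed

lemma finite_family_split:
  assumes "finite \<R>" "\<forall>R\<in>\<R>. infinite R"
  shows "\<exists>A. \<forall>R\<in>\<R>. splits A R"
proof -
  obtain a where "strict_mono a" "\<forall>k. \<forall>R\<in>\<R>. \<exists>j\<in>R. a k \<le> j \<and> j < a (Suc k)"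
    using finite_family_common_blocks[OF assms] by blast
  then have "splits (even_blocks a) R" if "R \<in> \<R>" for R
    using that by (intro splits_even_blocks) auto
  then show ?thesis
    by blast
qed

lemma reaping_family_infinite:
  assumes "reaping_family \<R>"
  shows "infinite \<R>"
proof
  assume "finite \<R>"
  moreover have "\<forall>R\<in>\<R>. infinite R"
    using assms unfolding reaping_family_def by blast
  ultimately obtain A where A: "\<forall>R\<in>\<R>. splits A R"
    using finite_family_split by blast
  obtain R where "R \<in> \<R>" "\<not> splits A R"
    using assms unfolding reaping_family_def by blast
  with A show False
    by blast
qed

lemma reaping_family_almost_constant:
  fixes P :: "nat \<Rightarrow> bool"
  assumes "reaping_family \<R>"
  shows "\<exists>R\<in>\<R>. \<exists>b. finite {j\<in>R. P j \<noteq> b}"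
proof -
  obtain R where "R \<in> \<R>" "\<not> splits {j. P j} R"
    using assms unfolding reaping_family_def by blast
  then have "finite {j\<in>R. P j \<noteq> False} \<or> finite {j\<in>R. P j \<noteq> True}"
    unfolding splits_def by (simp add: Int_def set_diff_eq conj_commute)
  then show ?thesis
    using \<open>R \<in> \<R>\<close> by blast
qed

lemma infinite_lists_branch:
  fixes X :: "bool list set"
  assumes "infinite X"
  shows "\<exists>z. \<forall>m. infinite {\<sigma>\<in>X. take m \<sigma> = map z [0..<m]}"
proof -
  define ext where "ext \<tau> = {\<sigma>\<in>X. take (length \<tau>) \<sigma> = \<tau>}" for \<tau>
  have ext_split: "ext \<tau> \<subseteq> insert \<tau> (ext (\<tau> @ [True]) \<union> ext (\<tau> @ [False]))" for \<tau>
  proof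
    fix \<sigma> assume \<sigma>: "\<sigma> \<in> ext \<tau>"
    show "\<sigma> \<in> insert \<tau> (ext (\<tau> @ [True]) \<union> ext (\<tau> @ [False]))"
    proof (cases "length \<tau> < length \<sigma>")
      case True
      then have "take (length (\<tau> @ [\<sigma> ! length \<tau>])) \<sigma> = \<tau> @ [\<sigma> ! length \<tau>]"
        using \<sigma> unfolding ext_def by (simp add: take_Suc_conv_app_nth)
      then show ?thesis
        using \<sigma> unfolding ext_def by (cases "\<sigma> ! length \<tau>") auto
    next
      case False
      then have "\<sigma> = \<tau>"
        using \<sigma> unfolding ext_def by simp
      then show ?thesis
        by simp
    qed
  qed
  have step: "\<exists>b. infinite (ext (\<tau> @ [b]))" if "infinite (ext \<tau>)" for \<tau>
  proof (rule ccontr)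
    assume "\<nexists>b. infinite (ext (\<tau> @ [b]))"
    then have "finite (insert \<tau> (ext (\<tau> @ [True]) \<union> ext (\<tau> @ [False])))"
      by simp
    then show False
      using that ext_split finite_subset by blast
  qed
  have "\<exists>f. \<forall>n. (length (f n) = n \<and> infinite (ext (f n))) \<and> (\<exists>b. f (Suc n) = f n @ [b])"
  proof (rule dependent_nat_choice[of "\<lambda>n \<tau>. length \<tau> = n \<and> infinite (ext \<tau>)" "\<lambda>_ \<tau> \<tau>'. \<exists>b. \<tau>' = \<tau> @ [b]"])
    show "\<exists>\<tau>. length \<tau> = 0 \<and> infinite (ext \<tau>)"
      using assms unfolding ext_def by simp
  next
    fix \<tau> n assume \<tau>: "length \<tau> = n \<and> infinite (ext \<tau>)"
    then obtain b where "infinite (ext (\<tau> @ [b]))"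
      using step by blast
    then show "\<exists>\<tau>'. (length \<tau>' = Suc n \<and> infinite (ext \<tau>')) \<and> (\<exists>b. \<tau>' = \<tau> @ [b])"
      using \<tau> by (intro exI[of _ "\<tau> @ [b]"]) simp
  qed
  then obtain f where f_length: "\<And>n. length (f n) = n" and f_infinite: "\<And>n. infinite (ext (f n))"
    and f_Suc: "\<And>n. \<exists>b. f (Suc n) = f n @ [b]"
    by blast
  define z where "z j = f (Suc j) ! j" for j
  have f_eq: "f m = map z [0..<m]" for m
  proof (induction m)
    case 0
    then show ?case
      using f_length[of 0] by simp
  next
    case (Suc m)
    obtain b where b: "f (Suc m) = f m @ [b]"
      using f_Suc by blast
    then have "z m = b"
      unfolding z_def using nth_append_length[of "f m" b] f_length[of m] by simp
    then show ?case
      using Suc.IH b by simp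
  qed
  have "{\<sigma>\<in>X. take m \<sigma> = map z [0..<m]} = ext (f m)" for m
    unfolding ext_def f_eq by simp
  then have "infinite {\<sigma>\<in>X. take m \<sigma> = map z [0..<m]}" for m
    using f_infinite by simp
  then show ?thesis
    by blast
qed

lemma infinite_lists_fan:
  fixes X :: "bool list set"
  assumes "infinite X"
  shows "\<exists>z a \<sigma>s. strict_mono a \<and> inj \<sigma>s \<and> (\<forall>k. \<sigma>s k \<in> X \<and> a k \<le> length (\<sigma>s k) \<and>
           length (\<sigma>s k) < a (Suc k) \<and> (\<forall>j<a k. \<sigma>s k ! j = z j))"
proof -
  obtain z where z: "\<And>m. infinite {\<sigma>\<in>X. take m \<sigma> = map z [0..<m]}"
    using infinite_lists_branch assms by blast
  have "\<forall>m. \<exists>\<sigma>. \<sigma> \<in> X \<and> take m \<sigma> = map z [0..<m]"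
    using infinite_imp_nonempty[OF z] by blast
  from choice[OF this] obtain \<tau> where \<tau>: "\<forall>m. \<tau> m \<in> X \<and> take m (\<tau> m) = map z [0..<m]"
    by blast
  define a where "a k = ((\<lambda>m. Suc (length (\<tau> m))) ^^ k) 0" for k
  define \<sigma>s where "\<sigma>s k = \<tau> (a k)" for k
  have in_X: "\<sigma>s k \<in> X" and prefix_z: "take (a k) (\<sigma>s k) = map z [0..<a k]" for k
    using \<tau> unfolding \<sigma>s_def by simp_all
  have a_le: "a k \<le> length (\<sigma>s k)" for k
    using arg_cong[OF prefix_z[of k], of length] by simp
  have length_less: "length (\<sigma>s k) < a (Suc k)" for k
    unfolding a_def \<sigma>s_def by simp
  have "strict_mono a"
    unfolding strict_mono_Suc_iff using a_le length_less le_less_trans by blast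
  have "inj \<sigma>s"
  proof -
    have "length (\<sigma>s k) < length (\<sigma>s (Suc k))" for k
      using a_le[of "Suc k"] length_less[of k] by linarith
    then have "strict_mono (length \<circ> \<sigma>s)"
      unfolding strict_mono_Suc_iff by simp
    then show ?thesis
      using strict_mono_imp_inj_on inj_on_imageI2 by blast
  qed
  have nth_z: "\<sigma>s k ! j = z j" if "j < a k" for k j
  proof -
    have "\<sigma>s k ! j = take (a k) (\<sigma>s k) ! j"
      using that by simp
    then show ?thesis
      using that unfolding prefix_z by simp
  qed
  have "\<forall>k. \<sigma>s k \<in> X \<and> a k \<le> length (\<sigma>s k) \<and> length (\<sigma>s k) < a (Suc k) \<and> (\<forall>j<a k. \<sigma>s k ! j = z j)"
    using in_X a_le length_less nth_z by blast
  with \<open>strict_mono a\<close> \<open>inj \<sigma>s\<close> show ?thesis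
    by blast
qed

lemma infinite_parity_class: "infinite {k :: nat. even k \<noteq> b}"
proof -
  have "range (\<lambda>k :: nat. 2 * k + of_bool b) \<subseteq> {k. even k \<noteq> b}"
    by auto
  moreover have "inj (\<lambda>k :: nat. 2 * k + of_bool b)"
    by (rule injI) simp
  ultimately show ?thesis
    using range_inj_infinite infinite_super by blast
qed

lemma fan_member_in_S_set:
  assumes a: "strict_mono a"
    and \<sigma>: "length \<sigma> < a (Suc k)" "\<forall>j<a k. \<sigma> ! j = z j"
    and D: "\<And>d. d \<in> D \<Longrightarrow> z d = b \<and> (d \<in> even_blocks a \<longleftrightarrow> b')"
    and k: "even k \<noteq> b'"
  shows "\<sigma> \<in> S_set D"
proof (rule S_setI)
  fix i assume i: "i \<in> D" "i < length \<sigma>"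
  show "\<sigma> ! i = b"
  proof (cases "i < a k")
    case False
    then have "i \<in> even_blocks a \<longleftrightarrow> even k"
      using mem_even_blocks_iff[OF a] i(2) \<sigma>(1) by simp
    then show ?thesis
      using D[OF i(1)] k by simp
  qed (use \<sigma>(2) D[OF i(1)] in simp)
qed

lemma reaping_family_hits_infinite_set:
  assumes \<R>: "reaping_family \<R>" and X: "infinite X"
  shows "\<exists>R\<in>\<R>. \<exists>R'\<in>\<R>. \<exists>n. infinite (X \<inter> S_set (enumerate R ` R' - {..<n}))"
proof -
  obtain z :: "nat \<Rightarrow> bool" and a :: "nat \<Rightarrow> nat" and \<sigma>s :: "nat \<Rightarrow> bool list"
    where a: "strict_mono a" and "inj \<sigma>s"
    and \<sigma>s: "\<And>k. \<sigma>s k \<in> X \<and> a k \<le> length (\<sigma>s k) \<and> length (\<sigma>s k) < a (Suc k) \<and> (\<forall>j<a k. \<sigma>s k ! j = z j)"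
    using infinite_lists_fan[OF X] by blast
  obtain R b where R: "R \<in> \<R>" and fin: "finite {j\<in>R. z j \<noteq> b}"
    using reaping_family_almost_constant[OF \<R>, of z] by blast
  define e where "e = enumerate R"
  obtain R' b' where R': "R' \<in> \<R>" and fin': "finite {j\<in>R'. (e j \<in> even_blocks a) \<noteq> b'}"
    using reaping_family_almost_constant[OF \<R>, of "\<lambda>j. e j \<in> even_blocks a"] by blast
  have "finite ({j\<in>R. z j \<noteq> b} \<union> e ` {j\<in>R'. (e j \<in> even_blocks a) \<noteq> b'})"
    using fin fin' by simp
  then obtain n where n: "{j\<in>R. z j \<noteq> b} \<union> e ` {j\<in>R'. (e j \<in> even_blocks a) \<noteq> b'} \<subseteq> {..<n}"
    using finite_nat_bounded by blast
  define D where "D = e ` R' - {..<n}"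
  have D: "z d = b \<and> (d \<in> even_blocks a \<longleftrightarrow> b')" if "d \<in> D" for d
  proof -
    from that have "d \<in> e ` R'" "n \<le> d"
      unfolding D_def by auto
    then obtain j where j: "j \<in> R'" "d = e j" "n \<le> d"
      by blast
    have "d \<in> R"
      using R \<R> enumerate_in_set j(2) unfolding e_def reaping_family_def by blast
    then show ?thesis
      using n j by auto
  qed
  define K where "K = {k :: nat. even k \<noteq> b'}"
  have "\<sigma>s ` K \<subseteq> X \<inter> S_set D"
    using \<sigma>s fan_member_in_S_set[OF a _ _ D] unfolding K_def by blast
  moreover have "infinite (\<sigma>s ` K)"
    using infinite_parity_class \<open>inj \<sigma>s\<close> unfolding K_def by (simp add: finite_image_iff inj_on_subset)
  ultimately have "infinite (X \<inter> S_set D)"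
    using infinite_super by blast
  then show ?thesis
    using R R' unfolding D_def e_def by blast
qed

lemma card_of_Times_Times_nat_infinite:
  assumes "infinite A"
  shows "|A \<times> A \<times> (UNIV :: nat set)| \<le>o |A|"
proof -
  have "|UNIV :: nat set| \<le>o |A|"
    using assms infinite_iff_card_of_nat by blast
  then have A_nat: "|A \<times> (UNIV :: nat set)| =o |A|"
    using card_of_Times_infinite[OF assms] by blast
  have "A \<times> (UNIV :: nat set) \<noteq> {}"
    using assms by auto
  then have "|A \<times> A \<times> (UNIV :: nat set)| =o |A|"
    using card_of_Times_infinite[OF assms _ ordIso_imp_ordLeq[OF A_nat]] by blast
  then show ?thesis
    by (rule ordIso_imp_ordLeq)
qed

lemma cov_plus_Spl_le_reaping:
  assumes \<R>: "reaping_family \<R>"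
  shows "\<exists>\<F>. cov_plus_family Spl \<F> \<and> |\<F>| \<le>o |\<R>|"
proof -
  define \<F> where "\<F> = (\<lambda>(R, R', n). S_set (enumerate R ` R' - {..<n})) ` (\<R> \<times> \<R> \<times> (UNIV :: nat set))"
  have "S_set (enumerate R ` R' - {..<n}) \<in> Spl" if "R \<in> \<R>" "R' \<in> \<R>" for R R' n
  proof (rule S_set_in_Spl)
    have "infinite R" "infinite R'"
      using that \<R> unfolding reaping_family_def by blast+
    then have "infinite (enumerate R ` R')"
      using inj_enumerate[of R] by (simp add: finite_image_iff inj_on_subset)
    then show "infinite (enumerate R ` R' - {..<n})"
      by simp
  qed
  then have "\<F> \<subseteq> Spl"
    unfolding \<F>_def by auto
  moreover have "\<exists>F\<in>\<F>. infinite (X \<inter> F)" if "X \<notin> Spl" for X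
  proof -
    have "infinite X"
      using finite_in_Spl that by blast
    then obtain R R' n where "R \<in> \<R>" "R' \<in> \<R>" "infinite (X \<inter> S_set (enumerate R ` R' - {..<n}))"
      using reaping_family_hits_infinite_set[OF \<R>] by blast
    moreover have "S_set (enumerate R ` R' - {..<n}) \<in> \<F>"
      using \<open>R \<in> \<R>\<close> \<open>R' \<in> \<R>\<close> unfolding \<F>_def by (intro image_eqI[of _ _ "(R, R', n)"]) auto
    ultimately show ?thesis
      by blast
  qed
  moreover have "|\<F>| \<le>o |\<R>|"
    unfolding \<F>_def
    using card_of_image card_of_Times_Times_nat_infinite[OF reaping_family_infinite[OF \<R>]]
    by (rule ordLeq_transitive)
  ultimately show ?thesis
    unfolding cov_plus_family_def by blast
qed

section \<open>Meager sets and cov+(Spl)\<close>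

text \<open>Along the column \<open>code_pos t 0, code_pos t 1, \<dots>\<close> the point c writes in unary the length of
  the block appended at node t. On a column that is constantly True, LEAST yields an unspecified
  value; the arguments below only use columns that contain a False.\<close>

definition code_pos :: "bool list \<Rightarrow> nat \<Rightarrow> nat" where
  "code_pos t k = prod_encode (to_nat t, k)"

definition block_length :: "(nat \<Rightarrow> bool) \<Rightarrow> bool list \<Rightarrow> nat" where
  "block_length c t = (LEAST k. \<not> c (code_pos t k))"

definition embed_block :: "(nat \<Rightarrow> bool) \<Rightarrow> bool list \<Rightarrow> bool list" where
  "embed_block c t = replicate (block_length c t) False @ [True]"

text \<open>The children \<open>s @ [False]\<close> and \<open>s @ [True]\<close> receive complementary copies of the block at s,
  so every position beyond \<open>tree_embed c s\<close> can be given either value.\<close>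

definition tree_embed :: "(nat \<Rightarrow> bool) \<Rightarrow> bool list \<Rightarrow> bool list" where
  "tree_embed c s = concat (map (\<lambda>k. map (\<lambda>v. v \<noteq> s ! k) (embed_block c (take k s))) [0..<length s])"

lemma tree_embed_Nil [simp]: "tree_embed c [] = []"
  by (simp add: tree_embed_def)

lemma tree_embed_snoc [simp]:
  "tree_embed c (s @ [i]) = tree_embed c s @ map (\<lambda>v. v \<noteq> i) (embed_block c s)"
proof -
  let ?F = "\<lambda>k. map (\<lambda>v. v \<noteq> (s @ [i]) ! k) (embed_block c (take k (s @ [i])))"
  have "tree_embed c (s @ [i]) = concat (map ?F [0..<length s]) @ ?F (length s)"
    unfolding tree_embed_def length_append_singleton upt_Suc_append[OF le0] by simp
  also have "map ?F [0..<length s] = map (\<lambda>k. map (\<lambda>v. v \<noteq> s ! k) (embed_block c (take k s))) [0..<length s]"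
    by (intro map_cong) (auto simp: nth_append)
  also have "?F (length s) = map (\<lambda>v. v \<noteq> i) (embed_block c s)"
    by simp
  finally show ?thesis
    unfolding tree_embed_def .
qed

lemma prefix_tree_embed_append: "prefix (tree_embed c s) (tree_embed c (s @ u))"
proof (induction u rule: rev_induct)
  case (snoc i u)
  then show ?case
    by (metis append.assoc prefix_prefix tree_embed_snoc)
qed simp

lemma tree_embed_cong:
  assumes "\<And>t. length t < length s \<Longrightarrow> block_length c t = block_length c' t"
  shows "tree_embed c s = tree_embed c' s"
  unfolding tree_embed_def embed_block_def using assms by (intro arg_cong[where f = concat] map_cong) auto

lemma tree_embed_extend_nth:
  "length (tree_embed c s) \<le> p \<Longrightarrow> \<exists>u. p < length (tree_embed c (s @ u)) \<and> tree_embed c (s @ u) ! p = v"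
proof (induction "p - length (tree_embed c s)" arbitrary: s rule: less_induct)
  case less
  show ?case
  proof (cases "p < length (tree_embed c s) + length (embed_block c s)")
    case True
    define i where "i = (embed_block c s ! (p - length (tree_embed c s)) \<noteq> v)"
    have "p < length (tree_embed c (s @ [i])) \<and> tree_embed c (s @ [i]) ! p = v"
      using True less.prems unfolding i_def by (auto simp: nth_append)
    then show ?thesis
      by blast
  next
    case False
    then have "length (tree_embed c (s @ [False])) \<le> p"
      "p - length (tree_embed c (s @ [False])) < p - length (tree_embed c s)"
      by (auto simp: embed_block_def)
    then show ?thesis
      using less.hyps by (metis append.assoc)
  qed
qed

lemma tree_embed_leaves_S_set:
  assumes "infinite A"
  shows "\<exists>u. tree_embed c (s @ u) \<notin> S_set A"
proof -
  obtain p where p: "p \<in> A" "length (tree_embed c s) \<le> p"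
    using assms unfolding infinite_nat_iff_unbounded_le by blast
  obtain u where u: "p < length (tree_embed c (s @ u))" "tree_embed c (s @ u) ! p = False"
    using tree_embed_extend_nth[OF p(2)] by blast
  obtain q where q: "q \<in> A" "length (tree_embed c (s @ u)) \<le> q"
    using assms unfolding infinite_nat_iff_unbounded_le by blast
  obtain u' where u': "q < length (tree_embed c (s @ u @ u'))" "tree_embed c (s @ u @ u') ! q = True"
    using tree_embed_extend_nth[OF q(2)] by (metis append.assoc)
  have "prefix (tree_embed c (s @ u)) (tree_embed c (s @ u @ u'))"
    using prefix_tree_embed_append by (metis append.assoc)
  then have "p < length (tree_embed c (s @ u @ u'))" "tree_embed c (s @ u @ u') ! p = False"
    using u by (auto simp: prefix_def nth_append)
  then have "tree_embed c (s @ u @ u') \<notin> S_set A"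
    using p q u' by (intro not_in_S_setI[of p A q]) auto
  then show ?thesis
    by blast
qed

lemma range_tree_embed_not_in_Spl: "range (tree_embed c) \<notin> Spl"
proof
  assume "range (tree_embed c) \<in> Spl"
  then obtain \<A> where \<A>: "finite \<A>" "\<forall>A\<in>\<A>. infinite A" "range (tree_embed c) \<subseteq> (\<Union>A\<in>\<A>. S_set A)"
    unfolding Spl_def by blast
  have "\<exists>s. \<forall>A\<in>\<A>. tree_embed c s \<notin> S_set A"
    using \<A>(1,2)
  proof (induction \<A> rule: finite_induct)
    case (insert A \<A>)
    then obtain s where "\<forall>B\<in>\<A>. tree_embed c s \<notin> S_set B"
      by blast
    moreover obtain u where "tree_embed c (s @ u) \<notin> S_set A"
      using tree_embed_leaves_S_set insert.prems by blast
    ultimately show ?case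
      using prefix_tree_embed_append S_set_prefix by blast
  qed simp
  then show False
    using \<A>(3) by blast
qed

text \<open>The extension of \<open>\<sigma>\<close> that codes \<open>D t\<close> on column t wherever the column lies beyond \<open>\<sigma>\<close>.\<close>

definition code_extension :: "bool list \<Rightarrow> (bool list \<Rightarrow> nat) \<Rightarrow> nat \<Rightarrow> bool" where
  "code_extension \<sigma> D p =
     (if p < length \<sigma> then \<sigma> ! p else snd (prod_decode p) < D (from_nat (fst (prod_decode p))))"

lemma block_length_code_extension:
  assumes "length \<sigma> \<le> to_nat t"
  shows "block_length (code_extension \<sigma> D) t = D t"
proof -
  have "code_extension \<sigma> D (code_pos t k) \<longleftrightarrow> k < D t" for k
    using assms le_prod_encode_1[of "to_nat t" k] unfolding code_extension_def code_pos_def by simp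
  then have "block_length (code_extension \<sigma> D) t = (LEAST k. \<not> k < D t)"
    unfolding block_length_def by simp
  also have "\<dots> = D t"
    by (rule Least_equality) simp_all
  finally show ?thesis .
qed

lemma block_length_code_extension_cong:
  "D t = D' t \<Longrightarrow> block_length (code_extension \<sigma> D) t = block_length (code_extension \<sigma> D') t"
  unfolding block_length_def code_extension_def code_pos_def by simp

lemma code_extension_column_ends: "\<exists>k. \<not> code_extension \<sigma> D (code_pos t k)"
proof -
  define k where "k = max (D t) (length \<sigma>)"
  have "length \<sigma> \<le> code_pos t k"
    unfolding code_pos_def k_def using le_prod_encode_2 max.cobounded2 order_trans by blast
  then have "\<not> code_extension \<sigma> D (code_pos t k)"
    unfolding code_extension_def by (simp add: code_pos_def k_def)
  then show ?thesis
    by blast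
qed

lemma block_length_eq_if_agree:
  assumes ends: "\<exists>k. \<not> c (code_pos t k)"
    and agree: "\<And>j. j \<le> block_length c t \<Longrightarrow> c' (code_pos t j) = c (code_pos t j)"
  shows "block_length c' t = block_length c t"
  unfolding block_length_def[of c']
proof (rule Least_equality)
  have "\<not> c (code_pos t (block_length c t))"
    using ends unfolding block_length_def by (rule LeastI_ex)
  then show "\<not> c' (code_pos t (block_length c t))"
    using agree by simp
next
  fix j assume "\<not> c' (code_pos t j)"
  show "block_length c t \<le> j"
  proof (rule ccontr)
    assume "\<not> block_length c t \<le> j"
    then have "c (code_pos t j)"
      using not_less_Least unfolding block_length_def by (metis not_le)
    then show False
      using agree \<open>\<not> block_length c t \<le> j\<close> \<open>\<not> c' (code_pos t j)\<close> by simp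
  qed
qed

lemma tree_embed_locally_constant:
  assumes ends: "\<And>t. \<exists>k. \<not> c0 (code_pos t k)"
  shows "\<exists>M. \<forall>c. (\<forall>p<M. c p = c0 p) \<longrightarrow> (\<forall>s. length s \<le> N \<longrightarrow> tree_embed c s = tree_embed c0 s)"
proof -
  have "finite {t :: bool list. length t \<le> N}"
    using finite_lists_length_le[of "UNIV :: bool set" N] by simp
  then have "finite (\<Union>t\<in>{t. length t \<le> N}. code_pos t ` {..block_length c0 t})"
    by simp
  then obtain M where "(\<Union>t\<in>{t. length t \<le> N}. code_pos t ` {..block_length c0 t}) \<subseteq> {..<M}"
    using finite_nat_bounded by blast
  then have M: "code_pos t j < M" if "length t \<le> N" "j \<le> block_length c0 t" for t j
    using that by blast
  have "tree_embed c s = tree_embed c0 s" if agree: "\<forall>p<M. c p = c0 p" and s: "length s \<le> N" for c s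
  proof (rule tree_embed_cong)
    fix t :: "bool list" assume "length t < length s"
    then have "length t \<le> N"
      using s by simp
    then show "block_length c t = block_length c0 t"
      using agree M by (intro block_length_eq_if_agree[OF ends]) simp
  qed
  then show ?thesis
    by blast
qed

lemma long_lists_large_to_nat: "\<exists>n. \<forall>t :: 'a::countable list. n \<le> length t \<longrightarrow> m \<le> to_nat t"
proof -
  have "finite (to_nat -` {..<m} :: 'a list set)"
    by (rule finite_vimageI) (simp_all add: inj_to_nat)
  then have "finite (length ` (to_nat -` {..<m} :: 'a list set))"
    by (rule finite_imageI)
  from finite_nat_bounded[OF this] obtain n where n: "length ` (to_nat -` {..<m} :: 'a list set) \<subseteq> {..<n}"
    by blast
  have bound: "length t < n" if "to_nat t < m" for t :: "'a list"
  proof -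
    have "length t \<in> length ` (to_nat -` {..<m} :: 'a list set)"
      using that by simp
    then show ?thesis
      using n by blast
  qed
  have "m \<le> to_nat t" if "n \<le> length t" for t :: "'a list"
  proof (rule ccontr)
    assume "\<not> m \<le> to_nat t"
    then have "length t < n"
      using bound by simp
    with that show False
      by simp
  qed
  then show ?thesis
    by blast
qed

lemma code_extension_level_avoiding_S_set:
  assumes A: "infinite A"
  shows "\<exists>D n. \<forall>s. length s = Suc n \<longrightarrow> tree_embed (code_extension \<sigma> D) s \<notin> S_set A"
proof -
  obtain n where n: "\<forall>t :: bool list. n \<le> length t \<longrightarrow> length \<sigma> \<le> to_nat t"
    using long_lists_large_to_nat by blast
  \<comment> \<open>The targets p t, q t are computed for c1, which agrees with c0 on all columns of length
    other than n; this avoids a circular definition of D.\<close>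
  define c1 where "c1 = code_extension \<sigma> (\<lambda>_. 0)"
  define L where "L t = length (tree_embed c1 t)" for t
  have "\<forall>k. \<exists>j. j \<in> A \<and> k \<le> j"
    using A unfolding infinite_nat_iff_unbounded_le by blast
  from choice[OF this] obtain next_A where next_A: "\<forall>k. next_A k \<in> A \<and> k \<le> next_A k"
    by blast
  define p where "p t = next_A (L t)" for t
  define q where "q t = next_A (Suc (p t))" for t
  have pq: "p t \<in> A" "q t \<in> A" "L t \<le> p t" "p t < q t" for t
    using next_A unfolding p_def q_def by (simp_all add: Suc_le_lessD)
  define D where "D t = (if length t = n then q t - L t else 0)" for t
  define c0 where "c0 = code_extension \<sigma> D"
  have "tree_embed c0 s \<notin> S_set A" if "length s = Suc n" for s
  proof -
    obtain t i where s: "s = t @ [i]" and t: "length t = n"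
      using \<open>length s = Suc n\<close> unfolding length_Suc_conv_rev by blast
    have "tree_embed c0 t = tree_embed c1 t"
    proof (rule tree_embed_cong)
      fix t' :: "bool list" assume "length t' < length t"
      then have "D t' = 0"
        using t by (simp add: D_def)
      then show "block_length c0 t' = block_length c1 t'"
        unfolding c0_def c1_def by (rule block_length_code_extension_cong)
    qed
    moreover have "length \<sigma> \<le> to_nat t"
      using n t by simp
    then have "block_length c0 t = q t - L t"
      unfolding c0_def using block_length_code_extension t by (simp add: D_def)
    ultimately have embed_s: "tree_embed c0 s = tree_embed c1 t @ replicate (q t - L t) i @ [\<not> i]"
      unfolding s by (simp add: embed_block_def)
    have "p t - L t < q t - L t"
      using pq[of t] by (intro diff_less_mono) simp_all
    then have "tree_embed c0 s ! p t = i" "tree_embed c0 s ! q t = (\<not> i)"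
      using pq[of t] unfolding embed_s L_def by (simp_all add: nth_append)
    moreover have "q t < length (tree_embed c0 s)"
      using pq[of t] unfolding embed_s L_def by simp
    ultimately show ?thesis
      using pq[of t] by (intro not_in_S_setI[of "p t" A "q t"]) simp_all
  qed
  then show ?thesis
    unfolding c0_def by blast
qed

definition S_at_every_level :: "nat set \<Rightarrow> (nat \<Rightarrow> bool) set" where
  "S_at_every_level A = {c. \<forall>n. \<exists>s. length s = n \<and> tree_embed c s \<in> S_set A}"

lemma basic_open_map_upt: "c \<in> basic_open (map c0 [0..<m]) \<longleftrightarrow> (\<forall>p<m. c p = c0 p)"
  unfolding basic_open_def by simp

lemma nowhere_dense_S_at_every_level:
  assumes "infinite A"
  shows "nowhere_dense_cantor (S_at_every_level A)"
  unfolding nowhere_dense_cantor_def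
proof
  fix \<sigma>
  obtain D n where D: "\<And>s. length s = Suc n \<Longrightarrow> tree_embed (code_extension \<sigma> D) s \<notin> S_set A"
    using code_extension_level_avoiding_S_set[OF assms] by blast
  define c0 where "c0 = code_extension \<sigma> D"
  have "\<And>t. \<exists>k. \<not> c0 (code_pos t k)"
    unfolding c0_def by (rule code_extension_column_ends)
  then obtain M where M: "\<forall>c. (\<forall>p<M. c p = c0 p) \<longrightarrow> (\<forall>s. length s \<le> Suc n \<longrightarrow> tree_embed c s = tree_embed c0 s)"
    using tree_embed_locally_constant by blast
  define m where "m = max M (length \<sigma>)"
  have "map c0 [0..<length \<sigma>] = \<sigma>"
    by (rule nth_equalityI) (simp_all add: c0_def code_extension_def)
  moreover have "[0..<m] = [0..<length \<sigma>] @ [length \<sigma>..<m]"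
    using upt_add_eq_append[OF le0, of "length \<sigma>" "m - length \<sigma>"] by (simp add: m_def)
  ultimately have \<sigma>_m: "\<sigma> @ map c0 [length \<sigma>..<m] = map c0 [0..<m]"
    by simp
  have "c \<notin> S_at_every_level A" if "c \<in> basic_open (map c0 [0..<m])" for c
  proof -
    have agree: "\<forall>p<M. c p = c0 p"
      using that unfolding basic_open_map_upt m_def by simp
    have "tree_embed c s \<notin> S_set A" if "length s = Suc n" for s
    proof -
      have "tree_embed c s = tree_embed c0 s"
        using M[rule_format, OF agree[rule_format]] that by simp
      then show ?thesis
        using D[OF that] unfolding c0_def by simp
    qed
    then show ?thesis
      unfolding S_at_every_level_def by blast
  qed
  then have "basic_open (\<sigma> @ map c0 [length \<sigma>..<m]) \<inter> S_at_every_level A = {}"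
    unfolding \<sigma>_m by blast
  then show "\<exists>\<rho>. basic_open (\<sigma> @ \<rho>) \<inter> S_at_every_level A = {}"
    by blast
qed

lemma infinite_tree_embed_Int_S_set:
  assumes "infinite (range (tree_embed c) \<inter> S_set A)"
  shows "c \<in> S_at_every_level A"
  unfolding S_at_every_level_def
proof (intro CollectI allI)
  fix n
  have "finite (tree_embed c ` {s. length s \<le> n})"
    using finite_lists_length_le[of "UNIV :: bool set" n] by simp
  then have "\<not> range (tree_embed c) \<inter> S_set A \<subseteq> tree_embed c ` {s. length s \<le> n}"
    using assms finite_subset by blast
  then obtain s where s: "tree_embed c s \<in> S_set A" "\<not> length s \<le> n"
    by blast
  have "prefix (tree_embed c (take n s)) (tree_embed c s)"
    using prefix_tree_embed_append[of c "take n s" "drop n s"] by simp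
  then have "tree_embed c (take n s) \<in> S_set A"
    using s(1) by (rule S_set_prefix)
  then show "\<exists>s. length s = n \<and> tree_embed c s \<in> S_set A"
    using s(2) by (intro exI[of _ "take n s"]) simp
qed

lemma meager_cantor_countable_Union:
  assumes "countable \<N>" "\<forall>N\<in>\<N>. nowhere_dense_cantor N" "Y \<subseteq> \<Union>\<N>"
  shows "meager_cantor Y"
proof -
  define N where "N = from_nat_into (insert {} \<N>)"
  have range_N: "range N = insert {} \<N>"
    unfolding N_def using assms(1) by simp
  have "nowhere_dense_cantor {}"
    unfolding nowhere_dense_cantor_def by simp
  then have "nowhere_dense_cantor (N n)" for n
    using assms(2) range_N by (metis insert_iff rangeI)
  moreover have "Y \<subseteq> (\<Union>n. N n)"
    using assms(3) range_N by simp
  ultimately show ?thesis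
    unfolding meager_cantor_def by blast
qed

lemma meager_hitting_Spl:
  assumes "F \<in> Spl"
  shows "meager_cantor {c. infinite (range (tree_embed c) \<inter> F)}"
proof -
  obtain \<A> where \<A>: "finite \<A>" "\<forall>A\<in>\<A>. infinite A" "F \<subseteq> (\<Union>A\<in>\<A>. S_set A)"
    using assms unfolding Spl_def by blast
  have "\<exists>A\<in>\<A>. infinite (range (tree_embed c) \<inter> S_set A)" if "infinite (range (tree_embed c) \<inter> F)" for c
  proof (rule ccontr)
    assume "\<not> (\<exists>A\<in>\<A>. infinite (range (tree_embed c) \<inter> S_set A))"
    then have "finite (\<Union>A\<in>\<A>. range (tree_embed c) \<inter> S_set A)"
      using finite_UN_I[OF \<A>(1), of "\<lambda>A. range (tree_embed c) \<inter> S_set A"] by blast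
    moreover have "range (tree_embed c) \<inter> F \<subseteq> (\<Union>A\<in>\<A>. range (tree_embed c) \<inter> S_set A)"
      using \<A>(3) by blast
    ultimately show False
      using that finite_subset by blast
  qed
  then have "{c. infinite (range (tree_embed c) \<inter> F)} \<subseteq> \<Union>(S_at_every_level ` \<A>)"
    using infinite_tree_embed_Int_S_set by blast
  moreover have "countable (S_at_every_level ` \<A>)"
    using \<A>(1) by (simp add: countable_finite)
  moreover have "\<forall>N\<in>S_at_every_level ` \<A>. nowhere_dense_cantor N"
    using \<A>(2) nowhere_dense_S_at_every_level by blast
  ultimately show ?thesis
    using meager_cantor_countable_Union by blast
qed

lemma cov_M_le_cov_plus_Spl:
  assumes \<F>: "cov_plus_family Spl \<F>"
  shows "\<exists>\<G>. cov_M_family \<G> \<and> |\<G>| \<le>o |\<F>|"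
proof -
  define \<G> where "\<G> = (\<lambda>F. {c. infinite (range (tree_embed c) \<inter> F)}) ` \<F>"
  have "\<forall>G\<in>\<G>. meager_cantor G"
    using \<F> meager_hitting_Spl unfolding \<G>_def cov_plus_family_def by blast
  moreover have "\<Union>\<G> = UNIV"
    using \<F> range_tree_embed_not_in_Spl unfolding \<G>_def cov_plus_family_def by blast
  moreover have "|\<G>| \<le>o |\<F>|"
    unfolding \<G>_def by (rule card_of_image)
  ultimately show ?thesis
    unfolding cov_M_family_def by blast
qed

theorem mainTheorem13:
  shows "(\<forall>\<F>. cov_plus_family Spl \<F> \<longrightarrow>
            (\<exists>\<G>. cov_M_family \<G> \<and> (card_of \<G>, card_of \<F>) \<in> ordLeq)) \<and>
         (\<forall>\<R>. reaping_family \<R> \<longrightarrow>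
            (\<exists>\<F>. cov_plus_family Spl \<F> \<and> (card_of \<F>, card_of \<R>) \<in> ordLeq))"
  using cov_M_le_cov_plus_Spl cov_plus_Spl_le_reaping by blast

end
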